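(* Let $\mathcal{F}=(W,R)$ be a frame. Then: (1) $\mathcal{F}\models_{\mathsf{PWK}_e^{\Box}}\Box\varphi\to\varphi$ (for all formulas $\varphi$) iff $R$ is reflexive; (2) $\mathcal{F}\models_{\mathsf{PWK}_e^{\Box}}\Box\varphi\to\Box\Box\varphi$ iff $R$ is transitive; (3) $\mathcal{F}\models_{\mathsf{PWK}_e^{\Box}}\Diamond\varphi\to\Box\Diamond\varphi$ iff $R$ is Euclidean.
   Context: Formulas are built from a countably infinite set of propositional variables and the constants $0,1$ using the unary connectives $\neg$, $J_2$, $\Box$ and the binary connective $\vee$; $\varphi\to\psi:=\neg\varphi\vee\psi$ and $\Diamond\varphi:=\neg\Box\neg\varphi$. Let $\mathbf{WK}^e$ be the algebra on $\{0,\tfrac12,1\}$ with $\neg0=1$, $\neg1=0$, $\neg\tfrac12=\tfrac12$; $a\vee b=\tfrac12$ if $a=\tfrac12$ or $b=\tfrac12$, otherwise $a\vee b=\max(a,b)$; $J_2(1)=1$, $J_2(\tfrac12)=J_2(0)=0$. A frame is a pair $(W,R)$ with $W\neq\emptyset$ and $R\subseteq W\times W$. A PWK-Kripke model on $(W,R)$ is $(W,R,v)$ with $v:W\times\mathrm{Fm}\to\{0,\tfrac12,1\}$ such that each $v(w,\cdot)$ commutes with $\neg,\vee,J_2,0,1$ as computed in $\mathbf{WK}^e$, and: $v(w,\Box\varphi)=\tfrac12$ iff $v(w,\varphi)=\tfrac12$; $v(w,\Box\varphi)=1$ iff $v(w,\varphi)\neq\tfrac12$ and $v(s,\varphi)\neq0$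 for all $s$ with $wRs$; $v(w,\Box\varphi)=0$ iff $v(w,\varphi)\neq\tfrac12$ and $v(s,\varphi)=0$ for some $s$ with $wRs$. $\mathcal{F}\models_{\mathsf{PWK}_e^{\Box}}\varphi$ means: for every PWK-Kripke model $(W,R,v)$ on $\mathcal{F}$ and every $w\in W$, $v(w,\varphi)\neq0$. $R$ is Euclidean if $wRs$ and $wRt$ imply $sRt$. *)

theory Defs
  imports Main
begin

datatype fm = Var nat | Zero | One | Neg fm | J2 fm | Box fm | Or fm fm

definition Imp :: "fm \<Rightarrow> fm \<Rightarrow> fm" where
  "Imp \<phi> \<psi> = Or (Neg \<phi>) \<psi>"

definition Dia :: "fm \<Rightarrow> fm" where
  "Dia \<phi> = Neg (Box (Neg \<phi>))"

datatype wk = V0 | Vh | V1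

fun wk_neg :: "wk \<Rightarrow> wk" where
  "wk_neg V0 = V1" | "wk_neg V1 = V0" | "wk_neg Vh = Vh"

fun wk_or :: "wk \<Rightarrow> wk \<Rightarrow> wk" where
  "wk_or Vh b = Vh"
| "wk_or a Vh = Vh"
| "wk_or V1 b = V1"
| "wk_or a V1 = V1"
| "wk_or V0 V0 = V0"

fun wk_J2 :: "wk \<Rightarrow> wk" where
  "wk_J2 V1 = V1" | "wk_J2 Vh = V0" | "wk_J2 V0 = V0"

definition pwk_model :: "'w set \<Rightarrow> ('w \<times> 'w) set \<Rightarrow> ('w \<Rightarrow> fm \<Rightarrow> wk) \<Rightarrow> bool" where
  "pwk_model W R v \<longleftrightarrow>
    (\<forall>w\<in>W.
      v w Zero = V0 \<and> v w One = V1 \<and>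
      (\<forall>\<phi>. v w (Neg \<phi>) = wk_neg (v w \<phi>)) \<and>
      (\<forall>\<phi>. v w (J2 \<phi>) = wk_J2 (v w \<phi>)) \<and>
      (\<forall>\<phi> \<psi>. v w (Or \<phi> \<psi>) = wk_or (v w \<phi>) (v w \<psi>)) \<and>
      (\<forall>\<phi>. v w (Box \<phi>) = Vh \<longleftrightarrow> v w \<phi> = Vh) \<and>
      (\<forall>\<phi>. v w (Box \<phi>) = V1 \<longleftrightarrow> v w \<phi> \<noteq> Vh \<and> (\<forall>s. (w, s) \<in> R \<longrightarrow> v s \<phi> \<noteq> V0)) \<and>
      (\<forall>\<phi>. v w (Box \<phi>) = V0 \<longleftrightarrow> v w \<phi> \<noteq> Vh \<and> (\<exists>s. (w, s) \<in> R \<and> v s \<phi> = V0)))"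

definition frame :: "'w set \<Rightarrow> ('w \<times> 'w) set \<Rightarrow> bool" where
  "frame W R \<longleftrightarrow> W \<noteq> {} \<and> R \<subseteq> W \<times> W"

definition frame_valid :: "'w set \<Rightarrow> ('w \<times> 'w) set \<Rightarrow> fm \<Rightarrow> bool" where
  "frame_valid W R \<phi> \<longleftrightarrow> (\<forall>v. pwk_model W R v \<longrightarrow> (\<forall>w\<in>W. v w \<phi> \<noteq> V0))"

definition euclidean :: "('w \<times> 'w) set \<Rightarrow> bool" where
  "euclidean R \<longleftrightarrow> (\<forall>w s t. (w, s) \<in> R \<longrightarrow> (w, t) \<in> R \<longrightarrow> (s, t) \<in> R)"

end

theory Submission
  imports Defs
begin

text \<open>Once the antecedent of each schema takes the value 1 at a world, the formulas the argument
  needs are classical there (\<open>\<Box>\<close> and \<open>\<not>\<close> are 1/2 exactly where their argument is), and the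
  classical correspondence arguments for T, 4 and 5 go through unchanged.  Conversely, a
  valuation with only the classical values 0 and 1 gives the classical Kripke semantics, so the
  usual two-valued countermodels refute the schemas on frames lacking the property.\<close>

lemma wk_neg_eq_iff [simp]:
  "wk_neg a = V0 \<longleftrightarrow> a = V1" "wk_neg a = V1 \<longleftrightarrow> a = V0" "wk_neg a = Vh \<longleftrightarrow> a = Vh"
  by (cases a; simp)+

lemma wk_or_neg_eq_V0_iff: "wk_or (wk_neg a) b = V0 \<longleftrightarrow> a = V1 \<and> b = V0"
  by (cases a; cases b; simp)

lemma pwk_modelD:
  assumes "pwk_model W R v" "w \<in> W"
  shows "v w (Neg \<phi>) = wk_neg (v w \<phi>)"
    and "v w (Or \<phi> \<psi>) = wk_or (v w \<phi>) (v w \<psi>)"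
    and "v w (Box \<phi>) = V1 \<longleftrightarrow> v w \<phi> \<noteq> Vh \<and> (\<forall>s. (w, s) \<in> R \<longrightarrow> v s \<phi> \<noteq> V0)"
    and "v w (Box \<phi>) = V0 \<longleftrightarrow> v w \<phi> \<noteq> Vh \<and> (\<exists>s. (w, s) \<in> R \<and> v s \<phi> = V0)"
  using assms unfolding pwk_model_def by auto

lemma pwk_model_Dia_V1:
  assumes v: "pwk_model W R v" and R: "R \<subseteq> W \<times> W" and w: "w \<in> W"
  shows "v w (Dia \<phi>) = V1 \<longleftrightarrow> v w \<phi> \<noteq> Vh \<and> (\<exists>s. (w, s) \<in> R \<and> v s \<phi> = V1)"
proof -
  have Neg_succ: "v s (Neg \<phi>) = wk_neg (v s \<phi>)" if "(w, s) \<in> R" for s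
    using that R pwk_modelD(1)[OF v] by blast
  have "v w (Dia \<phi>) = V1 \<longleftrightarrow> v w (Box (Neg \<phi>)) = V0"
    by (simp add: Dia_def pwk_modelD(1)[OF v w])
  also have "\<dots> \<longleftrightarrow> v w (Neg \<phi>) \<noteq> Vh \<and> (\<exists>s. (w, s) \<in> R \<and> v s (Neg \<phi>) = V0)"
    by (rule pwk_modelD(4)[OF v w])
  also have "\<dots> \<longleftrightarrow> v w \<phi> \<noteq> Vh \<and> (\<exists>s. (w, s) \<in> R \<and> v s \<phi> = V1)"
    by (auto simp: Neg_succ pwk_modelD(1)[OF v w])
  finally show ?thesis .
qed

lemma pwk_model_Dia_V0:
  assumes v: "pwk_model W R v" and R: "R \<subseteq> W \<times> W" and w: "w \<in> W"
  shows "v w (Dia \<phi>) = V0 \<longleftrightarrow> v w \<phi> \<noteq> Vh \<and> (\<forall>s. (w, s) \<in> R \<longrightarrow> v s \<phi> \<noteq> V1)"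
proof -
  have Neg_succ: "v s (Neg \<phi>) = wk_neg (v s \<phi>)" if "(w, s) \<in> R" for s
    using that R pwk_modelD(1)[OF v] by blast
  have "v w (Dia \<phi>) = V0 \<longleftrightarrow> v w (Box (Neg \<phi>)) = V1"
    by (simp add: Dia_def pwk_modelD(1)[OF v w])
  also have "\<dots> \<longleftrightarrow> v w (Neg \<phi>) \<noteq> Vh \<and> (\<forall>s. (w, s) \<in> R \<longrightarrow> v s (Neg \<phi>) \<noteq> V0)"
    by (rule pwk_modelD(3)[OF v w])
  also have "\<dots> \<longleftrightarrow> v w \<phi> \<noteq> Vh \<and> (\<forall>s. (w, s) \<in> R \<longrightarrow> v s \<phi> \<noteq> V1)"
    by (auto simp: Neg_succ pwk_modelD(1)[OF v w])
  finally show ?thesis .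
qed

lemma frame_valid_Imp_iff:
  "frame_valid W R (Imp \<phi> \<psi>) \<longleftrightarrow>
     (\<forall>v. pwk_model W R v \<longrightarrow> (\<forall>w\<in>W. v w \<phi> = V1 \<longrightarrow> v w \<psi> \<noteq> V0))"
  by (auto simp: frame_valid_def Imp_def pwk_modelD(1,2) wk_or_neg_eq_V0_iff)

lemma frame_valid_T_if_refl:
  assumes "\<forall>w\<in>W. (w, w) \<in> R"
  shows "frame_valid W R (Imp (Box \<phi>) \<phi>)"
  unfolding frame_valid_Imp_iff
proof (intro allI impI ballI)
  fix v w
  assume v: "pwk_model W R v" and w: "w \<in> W" and "v w (Box \<phi>) = V1"
  then have "\<forall>s. (w, s) \<in> R \<longrightarrow> v s \<phi> \<noteq> V0"
    using pwk_modelD(3)[OF v w] by blast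
  with assms w show "v w \<phi> \<noteq> V0" by blast
qed

lemma frame_valid_4_if_trans:
  assumes R: "R \<subseteq> W \<times> W" and "trans R"
  shows "frame_valid W R (Imp (Box \<phi>) (Box (Box \<phi>)))"
  unfolding frame_valid_Imp_iff
proof (intro allI impI ballI notI)
  fix v w
  assume v: "pwk_model W R v" and w: "w \<in> W"
    and box: "v w (Box \<phi>) = V1" and "v w (Box (Box \<phi>)) = V0"
  then obtain s where ws: "(w, s) \<in> R" and "v s (Box \<phi>) = V0"
    using pwk_modelD(4)[OF v w] by blast
  moreover have "s \<in> W" using R ws by blast
  ultimately obtain t where st: "(s, t) \<in> R" and t: "v t \<phi> = V0"
    using pwk_modelD(4)[OF v] by blast
  have "(w, t) \<in> R" using \<open>trans R\<close> ws st by (rule transD)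
  with box t show False using pwk_modelD(3)[OF v w] by blast
qed

lemma frame_valid_5_if_euclidean:
  assumes R: "R \<subseteq> W \<times> W" and "euclidean R"
  shows "frame_valid W R (Imp (Dia \<phi>) (Box (Dia \<phi>)))"
  unfolding frame_valid_Imp_iff
proof (intro allI impI ballI notI)
  fix v w
  assume v: "pwk_model W R v" and w: "w \<in> W"
    and dia: "v w (Dia \<phi>) = V1" and "v w (Box (Dia \<phi>)) = V0"
  then obtain t where wt: "(w, t) \<in> R" and "v t (Dia \<phi>) = V0"
    using pwk_modelD(4)[OF v w] by blast
  moreover have "t \<in> W" using R wt by blast
  ultimately have t: "\<forall>s. (t, s) \<in> R \<longrightarrow> v s \<phi> \<noteq> V1"
    using pwk_model_Dia_V0[OF v R] by blast
  obtain s where ws: "(w, s) \<in> R" and s: "v s \<phi> = V1"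
    using dia pwk_model_Dia_V1[OF v R w] by blast
  have "(t, s) \<in> R" using \<open>euclidean R\<close> wt ws unfolding euclidean_def by blast
  with t s show False by blast
qed

primrec pwk_eval :: "('w \<Rightarrow> nat \<Rightarrow> wk) \<Rightarrow> ('w \<times> 'w) set \<Rightarrow> fm \<Rightarrow> 'w \<Rightarrow> wk" where
  "pwk_eval f R (Var n) w = f w n"
| "pwk_eval f R Zero w = V0"
| "pwk_eval f R One w = V1"
| "pwk_eval f R (Neg \<phi>) w = wk_neg (pwk_eval f R \<phi> w)"
| "pwk_eval f R (J2 \<phi>) w = wk_J2 (pwk_eval f R \<phi> w)"
| "pwk_eval f R (Or \<phi> \<psi>) w = wk_or (pwk_eval f R \<phi> w) (pwk_eval f R \<psi> w)"
| "pwk_eval f R (Box \<phi>) w =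
     (if pwk_eval f R \<phi> w = Vh then Vh
      else if \<exists>s. (w, s) \<in> R \<and> pwk_eval f R \<phi> s = V0 then V0 else V1)"

lemma pwk_model_pwk_eval: "pwk_model W R (\<lambda>w \<phi>. pwk_eval f R \<phi> w)"
  unfolding pwk_model_def by auto

lemma frame_valid_ImpD:
  assumes "frame_valid W R (Imp \<phi> \<psi>)" "w \<in> W" "pwk_eval f R \<phi> w = V1"
  shows "pwk_eval f R \<psi> w \<noteq> V0"
  using assms pwk_model_pwk_eval unfolding frame_valid_Imp_iff by fast

definition classical_val :: "'w set \<Rightarrow> 'w \<Rightarrow> nat \<Rightarrow> wk" where
  "classical_val S w n = (if w \<in> S then V1 else V0)"

lemma pwk_eval_Box_V0I:
  assumes "pwk_eval f R \<phi> w \<noteq> Vh" "(w, s) \<in> R" "pwk_eval f R \<phi> s = V0"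
  shows "pwk_eval f R (Box \<phi>) w = V0"
  using assms by auto

lemma refl_if_frame_valid_T:
  assumes "frame_valid W R (Imp (Box (Var 0)) (Var 0))" "w \<in> W"
  shows "(w, w) \<in> R"
proof (rule ccontr)
  assume "(w, w) \<notin> R"
  then have "pwk_eval (classical_val (- {w})) R (Box (Var 0)) w = V1"
    by (auto simp: classical_val_def)
  from frame_valid_ImpD[OF assms this] show False by (simp add: classical_val_def)
qed

lemma trans_if_frame_valid_4:
  assumes R: "R \<subseteq> W \<times> W"
    and valid: "frame_valid W R (Imp (Box (Var 0)) (Box (Box (Var 0))))"
  shows "trans R"
proof (rule transI, rule ccontr)
  fix w s t
  assume ws: "(w, s) \<in> R" and st: "(s, t) \<in> R" and wt: "(w, t) \<notin> R"
  let ?f = "classical_val (- {t})"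
  have w: "w \<in> W" using R ws by blast
  have box_w: "pwk_eval ?f R (Box (Var 0)) w = V1"
    using wt by (auto simp: classical_val_def)
  have box_s: "pwk_eval ?f R (Box (Var 0)) s = V0"
    using st by (auto simp: classical_val_def)
  have "pwk_eval ?f R (Box (Box (Var 0))) w = V0"
    by (rule pwk_eval_Box_V0I[OF _ ws box_s]) (simp del: pwk_eval.simps add: box_w)
  with frame_valid_ImpD[OF valid w box_w] show False by contradiction
qed

lemma euclidean_if_frame_valid_5:
  assumes R: "R \<subseteq> W \<times> W"
    and valid: "frame_valid W R (Imp (Dia (Var 0)) (Box (Dia (Var 0))))"
  shows "euclidean R"
  unfolding euclidean_def
proof (intro allI impI, rule ccontr)
  fix w s t
  assume ws: "(w, s) \<in> R" and wt: "(w, t) \<in> R" and ts: "(t, s) \<notin> R"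
  let ?f = "classical_val {s}"
  have w: "w \<in> W" using R ws by blast
  have dia_w: "pwk_eval ?f R (Dia (Var 0)) w = V1"
    using ws by (auto simp: Dia_def classical_val_def)
  have dia_t: "pwk_eval ?f R (Dia (Var 0)) t = V0"
    using ts by (auto simp: Dia_def classical_val_def)
  have "pwk_eval ?f R (Box (Dia (Var 0))) w = V0"
    by (rule pwk_eval_Box_V0I[OF _ wt dia_t]) (simp del: pwk_eval.simps add: dia_w)
  with frame_valid_ImpD[OF valid w dia_w] show False by contradiction
qed

theorem mainTheorem15:
  fixes W :: "'w set" and R :: "('w \<times> 'w) set"
  assumes "frame W R"
  shows "((\<forall>\<phi>. frame_valid W R (Imp (Box \<phi>) \<phi>)) \<longleftrightarrow> (\<forall>w\<in>W. (w, w) \<in> R))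
       \<and> ((\<forall>\<phi>. frame_valid W R (Imp (Box \<phi>) (Box (Box \<phi>)))) \<longleftrightarrow> trans R)
       \<and> ((\<forall>\<phi>. frame_valid W R (Imp (Dia \<phi>) (Box (Dia \<phi>)))) \<longleftrightarrow> euclidean R)"
proof -
  have R: "R \<subseteq> W \<times> W" using assms unfolding frame_def by blast
  have "(\<forall>\<phi>. frame_valid W R (Imp (Box \<phi>) \<phi>)) \<longleftrightarrow> (\<forall>w\<in>W. (w, w) \<in> R)"
    by (metis frame_valid_T_if_refl refl_if_frame_valid_T)
  moreover have "(\<forall>\<phi>. frame_valid W R (Imp (Box \<phi>) (Box (Box \<phi>)))) \<longleftrightarrow> trans R"
    by (metis frame_valid_4_if_trans[OF R] trans_if_frame_valid_4[OF R])
  moreover have "(\<forall>\<phi>. frame_valid W R (Imp (Dia \<phi>) (Box (Dia \<phi>)))) \<longleftrightarrow> euclidean R"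
    by (metis frame_valid_5_if_euclidean[OF R] euclidean_if_frame_valid_5[OF R])
  ultimately show ?thesis by blast
qed

end
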